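(* Let $\mathcal A_+,\mathcal A_-\subseteq\mathbb R^n$ be disjoint finite sets such that $\mathcal A=\mathcal A_+\cup\mathcal A_-$ is full dimensional and $\mathcal A_-\subseteq\operatorname{int}(\operatorname{conv}(\mathcal A_+))$. Then every SONC signomial $f\in\mathcal S(\mathcal A_+,\mathcal A_-)$ satisfies $\#\operatorname{Sing}_{>0}(f)\le1$.
   Context: For disjoint finite $\mathcal A_+,\mathcal A_-\subseteq\mathbb R^n$, a signomial with signed support $(\mathcal A_+,\mathcal A_-)$ is $f:\mathbb R^n_{>0}\to\mathbb R$, $f(x)=\sum_{a\in\mathcal A_+}c_ax^a-\sum_{b\in\mathcal A_-}c_bx^b$ with all $c_a,c_b>0$; $\mathcal S(\mathcal A_+,\mathcal A_-)$ is the set of these. Full dimensional means $\dim\operatorname{conv}(\mathcal A)=n$. $\operatorname{Sing}_{>0}(f)$ is the set of $x\in\mathbb R^n_{>0}$ with $f(x)=x_1\partial_{x_1}f(x)=\dots=x_n\partial_{x_n}f(x)=0$. A signed support $(\mathcal B_+,\mathcal B_-)$ with $\mathcal B=\mathcal B_+\cup\mathcal B_-$ is an extended circuit if either $\#\mathcal B=\#\mathcal B_+=1$ or $\operatorname{conv}(\mathcal B)$ is a simplex whose vertex set is $\mathcal B_+$; it is a circuit if either $\#\mathcal B=\#\mathcal B_+=1$ or it is an extended circuit with $\#\mathcal B_-=1$ and $\mathcal B_-\subseteq\operatorname{relint}(\operatorname{conv}(\mathcal B_+))$. A circuit signomial is a signomial whose signed support is a circuit. A signomial on $\mathbb R^n_{>0}$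 is SONC if it is a finite sum of circuit signomials each of which is nonnegative on $\mathbb R^n_{>0}$. *)

theory Defs
  imports "HOL-Analysis.Analysis"
begin

definition pos_orthant :: "(real ^ 'n) set" where
  "pos_orthant = {x. \<forall>i. x $ i > 0}"

definition monomial_powr :: "real ^ 'n \<Rightarrow> real ^ 'n \<Rightarrow> real" where
  "monomial_powr x a = (\<Prod>i\<in>UNIV. (x $ i) powr (a $ i))"

definition signomials :: "(real ^ 'n) set \<Rightarrow> (real ^ 'n) set \<Rightarrow> (real ^ 'n \<Rightarrow> real) set" where
  "signomials Ap Am = {f. \<exists>c :: real ^ 'n \<Rightarrow> real.
      (\<forall>a\<in>Ap \<union> Am. c a > 0) \<and>
      (\<forall>x\<in>pos_orthant. f x = (\<Sum>a\<in>Ap. c a * monomial_powr x a) - (\<Sum>b\<in>Am. c b * monomial_powr x b))}"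

definition partial_deriv :: "(real ^ 'n \<Rightarrow> real) \<Rightarrow> 'n \<Rightarrow> real ^ 'n \<Rightarrow> real" where
  "partial_deriv f i x = deriv (\<lambda>t. f (x + (t - x $ i) *\<^sub>R axis i 1)) (x $ i)"

definition Sing_pos :: "(real ^ 'n \<Rightarrow> real) \<Rightarrow> (real ^ 'n) set" where
  "Sing_pos f = {x \<in> pos_orthant. f x = 0 \<and> (\<forall>i. x $ i * partial_deriv f i x = 0)}"

definition extended_circuit :: "(real ^ 'n) set \<Rightarrow> (real ^ 'n) set \<Rightarrow> bool" where
  "extended_circuit Bp Bm \<longleftrightarrow>
     finite Bp \<and> finite Bm \<and> Bp \<inter> Bm = {} \<and>
     ((card (Bp \<union> Bm) = 1 \<and> card Bp = 1) \<or>
      (Bp \<noteq> {} \<and> \<not> affine_dependent Bp \<and> convex hull (Bp \<union> Bm) = convex hull Bp))"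

definition circuit :: "(real ^ 'n) set \<Rightarrow> (real ^ 'n) set \<Rightarrow> bool" where
  "circuit Bp Bm \<longleftrightarrow>
     finite Bp \<and> finite Bm \<and> Bp \<inter> Bm = {} \<and>
     ((card (Bp \<union> Bm) = 1 \<and> card Bp = 1) \<or>
      (extended_circuit Bp Bm \<and> card Bm = 1 \<and> Bm \<subseteq> rel_interior (convex hull Bp)))"

definition circuit_signomial :: "(real ^ 'n \<Rightarrow> real) \<Rightarrow> bool" where
  "circuit_signomial f \<longleftrightarrow> (\<exists>Bp Bm. circuit Bp Bm \<and> f \<in> signomials Bp Bm)"

definition SONC :: "(real ^ 'n \<Rightarrow> real) \<Rightarrow> bool" where
  "SONC f \<longleftrightarrow> (\<exists>(k::nat) (g :: nat \<Rightarrow> real ^ 'n \<Rightarrow> real).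
     (\<forall>j<k. circuit_signomial (g j) \<and> (\<forall>x\<in>pos_orthant. g j x \<ge> 0)) \<and>
     (\<forall>x\<in>pos_orthant. f x = (\<Sum>j<k. g j x)))"

end

theory Submission
  imports Defs "HOL-Real_Asymp.Real_Asymp"
begin

text \<open>In logarithmic coordinates \<open>x = exp v\<close> every monomial becomes \<open>exp (a \<bullet> v)\<close>.
  Along a line \<open>v = y + t d\<close> a nonnegative circuit signomial with negative term \<open>b\<close> is
  \<open>exp (b \<bullet> v)\<close> times a positive combination of exponentials in \<open>t\<close> minus a constant; if it
  vanishes at \<open>t = 0\<close> and \<open>t = 1\<close>, both are minima, and the difference of the derivatives
  there is a sum of nonnegative terms \<open>q\<^sub>a \<alpha>\<^sub>a (exp \<alpha>\<^sub>a - 1)\<close>, so all exponents \<open>\<alpha>\<^sub>a\<close>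
  vanish and it vanishes on the whole line. Hence a SONC signomial vanishing at
  two positive points vanishes on the exponential curve through them. But in the direction
  \<open>d\<close>, a vertex of \<open>conv Ap\<close> maximising \<open>a \<bullet> d\<close> beats every interior exponent of \<open>Am\<close>,
  so the signomial is eventually positive along that curve.\<close>

definition exp_vec :: "real ^ 'n \<Rightarrow> real ^ 'n" where
  "exp_vec v = (\<chi> i. exp (v $ i))"

lemma exp_vec_in_pos_orthant: "exp_vec v \<in> pos_orthant"
  by (simp add: exp_vec_def pos_orthant_def)

lemma exp_vec_ln: "x \<in> pos_orthant \<Longrightarrow> exp_vec (\<chi> i. ln (x $ i)) = x"
  by (simp add: exp_vec_def pos_orthant_def vec_eq_iff)

lemma monomial_powr_exp_vec: "monomial_powr (exp_vec v) a = exp (a \<bullet> v)"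
  by (simp add: monomial_powr_def inner_vec_def exp_vec_def powr_def exp_sum)

lemma signomials_exp_vec:
  assumes "f \<in> signomials Ap Am"
  shows "\<exists>c. (\<forall>a\<in>Ap \<union> Am. c a > 0) \<and>
    (\<forall>v. f (exp_vec v) = (\<Sum>a\<in>Ap. c a * exp (a \<bullet> v)) - (\<Sum>b\<in>Am. c b * exp (b \<bullet> v)))"
proof -
  obtain c where "\<forall>a\<in>Ap \<union> Am. c a > 0" and "\<forall>x\<in>pos_orthant.
      f x = (\<Sum>a\<in>Ap. c a * monomial_powr x a) - (\<Sum>b\<in>Am. c b * monomial_powr x b)"
    using assms unfolding signomials_def by blast
  then show ?thesis
    by (intro exI[of _ c]) (simp add: exp_vec_in_pos_orthant monomial_powr_exp_vec)
qed

lemma mult_exp_minus_one_nonneg: "0 \<le> (x::real) * (exp x - 1)"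
  by (cases "x \<ge> 0") (auto intro: mult_nonpos_nonpos)

lemma exp_sum_exponent_zero_if_min_at_0_1:
  fixes q \<alpha> :: "'a \<Rightarrow> real"
  assumes "finite B" and q_pos: "\<And>a. a \<in> B \<Longrightarrow> q a > 0"
    and ge: "\<And>t. c \<le> (\<Sum>a\<in>B. q a * exp (t * \<alpha> a))"
    and at_0: "(\<Sum>a\<in>B. q a) = c" and at_1: "(\<Sum>a\<in>B. q a * exp (\<alpha> a)) = c"
    and "a \<in> B"
  shows "\<alpha> a = 0"
proof -
  define \<phi> where "\<phi> t = (\<Sum>a\<in>B. q a * exp (t * \<alpha> a))" for t
  define \<phi>' where "\<phi>' t = (\<Sum>a\<in>B. q a * (\<alpha> a * exp (t * \<alpha> a)))" for t
  have deriv: "(\<phi> has_real_derivative \<phi>' t) (at t)" for t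
    unfolding \<phi>_def \<phi>'_def by (auto intro!: derivative_eq_intros simp: ac_simps)
  have "\<phi>' s = 0" if "\<phi> s = c" for s
    by (rule DERIV_local_min[OF deriv zero_less_one]) (use ge that in \<open>auto simp: \<phi>_def\<close>)
  then have "\<phi>' 1 - \<phi>' 0 = 0"
    using at_0 at_1 by (simp add: \<phi>_def)
  then have "(\<Sum>a\<in>B. q a * (\<alpha> a * (exp (\<alpha> a) - 1))) = 0"
    by (simp add: \<phi>'_def algebra_simps flip: sum_subtractf)
  then have "q a * (\<alpha> a * (exp (\<alpha> a) - 1)) = 0"
    using assms(1,6) q_pos mult_exp_minus_one_nonneg
    by (subst (asm) sum_nonneg_eq_0_iff) (auto simp: less_imp_le)
  then show ?thesis
    using q_pos[OF \<open>a \<in> B\<close>] by auto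
qed

lemma circuit_signomial_zero_on_line:
  fixes g :: "real ^ 'n \<Rightarrow> real"
  assumes "circuit_signomial g" and g_nonneg: "\<forall>x\<in>pos_orthant. g x \<ge> 0"
    and g_0: "g (exp_vec y) = 0" and g_1: "g (exp_vec (y + d)) = 0"
  shows "g (exp_vec (y + t *\<^sub>R d)) = 0"
proof -
  obtain Bp Bm where circ: "circuit Bp Bm" and g: "g \<in> signomials Bp Bm"
    using assms(1) circuit_signomial_def by blast
  obtain c where c_pos: "\<forall>a\<in>Bp \<union> Bm. c a > 0"
    and g_exp: "\<forall>v. g (exp_vec v) = (\<Sum>a\<in>Bp. c a * exp (a \<bullet> v)) - (\<Sum>b\<in>Bm. c b * exp (b \<bullet> v))"
    using signomials_exp_vec[OF g] by blast
  from circ have fin: "finite Bp" "finite Bm" "Bp \<inter> Bm = {}"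
    and shape: "(card (Bp \<union> Bm) = 1 \<and> card Bp = 1) \<or> card Bm = 1"
    unfolding circuit_def by auto
  show ?thesis
  proof (cases "card Bm = 1")
    case False
    then obtain a where "Bp = {a}" "Bm = {}"
      using shape fin card_Un_disjoint[OF fin] by (auto simp: card_1_singleton_iff)
    then show ?thesis
      using g_0 c_pos by (simp add: g_exp)
  next
    case True
    then obtain b where Bm: "Bm = {b}" by (auto simp: card_1_singleton_iff)
    define q where "q a = c a * exp ((a - b) \<bullet> y)" for a
    define \<alpha> where "\<alpha> a = (a - b) \<bullet> d" for a
    have g_line: "g (exp_vec (y + s *\<^sub>R d))
        = exp (b \<bullet> (y + s *\<^sub>R d)) * ((\<Sum>a\<in>Bp. q a * exp (s * \<alpha> a)) - c b)" for s
      by (simp add: g_exp Bm q_def \<alpha>_def sum_distrib_left right_diff_distrib inner_diff_left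
          inner_add_right exp_diff exp_add field_simps)
    have ge: "c b \<le> (\<Sum>a\<in>Bp. q a * exp (s * \<alpha> a))" for s
    proof -
      have "0 \<le> g (exp_vec (y + s *\<^sub>R d))"
        using g_nonneg exp_vec_in_pos_orthant by blast
      then show ?thesis
        by (simp add: g_line zero_le_mult_iff)
    qed
    have at_0: "(\<Sum>a\<in>Bp. q a) = c b" and at_1: "(\<Sum>a\<in>Bp. q a * exp (\<alpha> a)) = c b"
      using g_line[of 0] g_line[of 1] g_0 g_1 by simp_all
    have "\<alpha> a = 0" if "a \<in> Bp" for a
      using exp_sum_exponent_zero_if_min_at_0_1[OF fin(1) _ ge at_0 at_1 that] c_pos
      by (simp add: q_def)
    then show ?thesis
      using g_line[of t] at_0 by simp
  qed
qed

lemma SONC_zero_on_line: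
  fixes f :: "real ^ 'n \<Rightarrow> real"
  assumes "SONC f" and "f (exp_vec y) = 0" and "f (exp_vec (y + d)) = 0"
  shows "f (exp_vec (y + t *\<^sub>R d)) = 0"
proof -
  obtain k :: nat and g :: "nat \<Rightarrow> real ^ 'n \<Rightarrow> real"
    where g: "\<forall>j<k. circuit_signomial (g j) \<and> (\<forall>x\<in>pos_orthant. g j x \<ge> 0)"
    and f_sum: "\<forall>x\<in>pos_orthant. f x = (\<Sum>j<k. g j x)"
    using assms(1) unfolding SONC_def by blast
  have g_zero: "g j x = 0" if "j < k" "x \<in> pos_orthant" "f x = 0" for j x
    using that f_sum g sum_nonneg_eq_0_iff[of "{..<k}" "\<lambda>j. g j x"] by auto
  have "g j (exp_vec (y + t *\<^sub>R d)) = 0" if "j < k" for j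
    using circuit_signomial_zero_on_line g[rule_format, OF that] g_zero[OF that] assms(2,3)
      exp_vec_in_pos_orthant by blast
  moreover have "f (exp_vec (y + t *\<^sub>R d)) = (\<Sum>j<k. g j (exp_vec (y + t *\<^sub>R d)))"
    using f_sum exp_vec_in_pos_orthant by blast
  ultimately show ?thesis
    by simp
qed

lemma inner_lt_Max_if_in_interior_convex_hull:
  fixes A :: "'a::euclidean_space set"
  assumes "finite A" and "b \<in> interior (convex hull A)" and "d \<noteq> 0"
  shows "b \<bullet> d < Max ((\<lambda>a. a \<bullet> d) ` A)"
proof -
  define M where "M = Max ((\<lambda>a. a \<bullet> d) ` A)"
  have "convex hull A \<subseteq> {x. d \<bullet> x \<le> M}"
  proof (rule hull_minimal)
    show "A \<subseteq> {x. d \<bullet> x \<le> M}"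
      unfolding M_def using assms(1) by (auto simp: inner_commute[of d])
  qed (rule convex_halfspace_le)
  then have "interior (convex hull A) \<subseteq> {x. d \<bullet> x < M}"
    using interior_mono interior_halfspace_le[OF assms(3)] by metis
  then show ?thesis
    using assms(2) by (auto simp: M_def inner_commute[of d])
qed

lemma exp_sum_eventually_less_exp:
  fixes c \<beta> :: "'a \<Rightarrow> real"
  assumes "finite N" and "C > 0" and "\<And>b. b \<in> N \<Longrightarrow> \<beta> b < \<gamma>"
  shows "eventually (\<lambda>t. (\<Sum>b\<in>N. c b * exp (t * \<beta> b)) < C * exp (t * \<gamma>)) at_top"
proof -
  have "((\<lambda>t. \<Sum>b\<in>N. c b * exp (t * (\<beta> b - \<gamma>))) \<longlongrightarrow> (\<Sum>b\<in>N. c b * 0)) at_top"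
  proof (intro tendsto_sum tendsto_mult tendsto_const)
    fix b assume "b \<in> N"
    then have "\<beta> b - \<gamma> < 0" using assms(3) by simp
    then show "((\<lambda>t. exp (t * (\<beta> b - \<gamma>))) \<longlongrightarrow> 0) at_top" by real_asymp
  qed
  then have "eventually (\<lambda>t. (\<Sum>b\<in>N. c b * exp (t * (\<beta> b - \<gamma>))) < C) at_top"
    using assms(2) by (simp add: order_tendstoD(2))
  then show ?thesis
  proof (rule eventually_mono)
    fix t assume "(\<Sum>b\<in>N. c b * exp (t * (\<beta> b - \<gamma>))) < C"
    then have "exp (t * \<gamma>) * (\<Sum>b\<in>N. c b * exp (t * (\<beta> b - \<gamma>))) < exp (t * \<gamma>) * C"
      by simp
    also have "exp (t * \<gamma>) * (\<Sum>b\<in>N. c b * exp (t * (\<beta> b - \<gamma>))) = (\<Sum>b\<in>N. c b * exp (t * \<beta> b))"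
      by (simp add: sum_distrib_left right_diff_distrib exp_diff)
    finally show "(\<Sum>b\<in>N. c b * exp (t * \<beta> b)) < C * exp (t * \<gamma>)"
      by (simp add: mult.commute)
  qed
qed

lemma signomial_eventually_pos_along_ray:
  assumes "f \<in> signomials Ap Am" and "finite Ap" and "finite Am" and "Ap \<noteq> {}"
    and "Am \<subseteq> interior (convex hull Ap)" and "d \<noteq> 0"
  shows "eventually (\<lambda>t. f (exp_vec (y + t *\<^sub>R d)) > 0) at_top"
proof -
  obtain c where c_pos: "\<forall>a\<in>Ap \<union> Am. c a > 0"
    and f_exp: "\<forall>v. f (exp_vec v) = (\<Sum>a\<in>Ap. c a * exp (a \<bullet> v)) - (\<Sum>b\<in>Am. c b * exp (b \<bullet> v))"
    using signomials_exp_vec[OF assms(1)] by blast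
  define c' where "c' a = c a * exp (a \<bullet> y)" for a
  have f_line: "f (exp_vec (y + t *\<^sub>R d))
      = (\<Sum>a\<in>Ap. c' a * exp (t * (a \<bullet> d))) - (\<Sum>b\<in>Am. c' b * exp (t * (b \<bullet> d)))" for t
    by (simp add: f_exp c'_def inner_add_right exp_add mult.assoc)
  define M where "M = Max ((\<lambda>a. a \<bullet> d) ` Ap)"
  have "M \<in> (\<lambda>a. a \<bullet> d) ` Ap"
    unfolding M_def using assms(2,4) by (intro Max_in) auto
  then obtain p where p: "p \<in> Ap" "p \<bullet> d = M"
    by auto
  have lead: "c' p * exp (t * M) \<le> (\<Sum>a\<in>Ap. c' a * exp (t * (a \<bullet> d)))" for t
    using member_le_sum[OF p(1), of "\<lambda>a. c' a * exp (t * (a \<bullet> d))"] assms(2) c_pos p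
    by (force simp: c'_def less_imp_le)
  have "b \<bullet> d < M" if "b \<in> Am" for b
    using inner_lt_Max_if_in_interior_convex_hull assms(2,5,6) that by (auto simp: M_def)
  then have "eventually (\<lambda>t. (\<Sum>b\<in>Am. c' b * exp (t * (b \<bullet> d))) < c' p * exp (t * M)) at_top"
    using c_pos p(1) assms(3) by (intro exp_sum_eventually_less_exp) (auto simp: c'_def)
  then show ?thesis
  proof (rule eventually_mono)
    fix t assume "(\<Sum>b\<in>Am. c' b * exp (t * (b \<bullet> d))) < c' p * exp (t * M)"
    then show "f (exp_vec (y + t *\<^sub>R d)) > 0"
      using lead[of t] f_line[of t] by linarith
  qed
qed

lemma SONC_signomial_pos_zero_unique:
  assumes "f \<in> signomials Ap Am" and "SONC f" and "finite Ap" and "finite Am" and "Ap \<noteq> {}"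
    and "Am \<subseteq> interior (convex hull Ap)"
    and "x \<in> pos_orthant" "f x = 0" and "z \<in> pos_orthant" "f z = 0"
  shows "x = z"
proof (rule ccontr)
  assume "x \<noteq> z"
  define y where "y = (\<chi> i. ln (x $ i))"
  define d where "d = (\<chi> i. ln (z $ i)) - y"
  have "exp_vec y = x" "exp_vec (y + d) = z"
    using exp_vec_ln assms(7,9) by (simp_all add: y_def d_def)
  then have "d \<noteq> 0" and zero_on_line: "f (exp_vec (y + t *\<^sub>R d)) = 0" for t
    using \<open>x \<noteq> z\<close> SONC_zero_on_line[OF assms(2)] assms(8,10) by auto
  have "eventually (\<lambda>t::real. False) at_top"
    using signomial_eventually_pos_along_ray[OF assms(1,3-6) \<open>d \<noteq> 0\<close>, of y]
    by eventually_elim (simp add: zero_on_line)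
  then show False
    by simp
qed

theorem proposition3p6:
  fixes Ap Am :: "(real ^ 'n) set" and f :: "real ^ 'n \<Rightarrow> real"
  assumes "finite Ap" and "finite Am" and "Ap \<inter> Am = {}"
    and "aff_dim (Ap \<union> Am) = int CARD('n)"
    and "Am \<subseteq> interior (convex hull Ap)"
    and "f \<in> signomials Ap Am"
    and "SONC f"
  shows "finite (Sing_pos f) \<and> card (Sing_pos f) \<le> 1"
proof -
  \<comment> \<open>Full dimensionality is only used to exclude \<open>Ap = {}\<close>, where \<open>f\<close> vanishes identically.\<close>
  have "Ap \<noteq> {}"
    using assms(4,5) by auto
  then have "x = z" if "x \<in> Sing_pos f" "z \<in> Sing_pos f" for x z
    using SONC_signomial_pos_zero_unique[OF assms(6,7,1,2) \<open>Ap \<noteq> {}\<close> assms(5)] that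
    unfolding Sing_pos_def by blast
  then have "Sing_pos f = {} \<or> (\<exists>x. Sing_pos f = {x})"
    by blast
  then show ?thesis
    by auto
qed

end
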